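(* Let $N_1,N_2,N_3$ be dyadic with $N_1\gg N_2,N_3$, let $\phi_1,\phi_2,\phi_3\in L^2(\mathbb{T})$ satisfy $\mathrm{supp}\,\hat\phi_j\subset\mathcal{I}_{N_j}$, and let $0<\delta\lesssim N_1^{-1}$. Then \[ \big\|e^{it\partial_x^2}\phi_1\cdot H\big(e^{it\partial_x^2}\phi_2\,\overline{e^{it\partial_x^2}\phi_3}\big)\big\|_{L^2([0,\delta];L^2(\mathbb{T}))}\lesssim\Big(\frac{N_2\wedge N_3}{N_1}\Big)^{1/2}\|\phi_1\|_{L^2}\|\phi_2\|_{L^2}\|\phi_3\|_{L^2}. \] The same estimate holds if $e^{it\partial_x^2}\phi_1$ is replaced by $\overline{e^{it\partial_x^2}\phi_1}$, and also if $H$ is replaced by any Fourier multiplier with bounded symbol (with the constant then depending on the bound of the symbol).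
   Context: $\mathbb{T}=\mathbb{R}/2\pi\mathbb{Z}$; $\hat\phi(n)$, $n\in\mathbb{Z}$, are Fourier coefficients. $H$ is the Hilbert transformation, the Fourier multiplier with symbol $-i\,\mathrm{sgn}(\xi)$. Dyadic numbers range over $\{1,2,4,\dots\}$; $\mathcal{I}_1=[-2,2]$, $\mathcal{I}_N=[-2N,2N]\setminus(-N/2,N/2)$ for $N\ge2$. $N_2\wedge N_3=\min\{N_2,N_3\}$. $A\gg B$ means $A\ge C_0B$ for a sufficiently large absolute constant $C_0$; $\lesssim$ hides constants depending only on the constants in these relations. *)

theory Defs
  imports "HOL-Analysis.Analysis"
begin

definition dyadic :: "nat \<Rightarrow> bool" where
  "dyadic N \<longleftrightarrow> (\<exists>k. N = 2 ^ k)"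

definition freq_set :: "nat \<Rightarrow> int set" where
  "freq_set N = (if N = 1 then {-2..2}
     else {n. \<bar>n\<bar> \<le> 2 * int N \<and> \<not> (real_of_int \<bar>n\<bar> < real N / 2)})"

text \<open>A function phi on the torus with Fourier support in I_N is (a.e.) the trigonometric
  polynomial with coefficients c (c n = 0 outside I_N). schr N c t x is
  (e^{it d_x^2} phi)(x) = sum_n c n e^{i(n x - n^2 t)}; schr N c 0 is phi itself.\<close>
definition schr :: "nat \<Rightarrow> (int \<Rightarrow> complex) \<Rightarrow> real \<Rightarrow> real \<Rightarrow> complex" where
  "schr N c t x = (\<Sum>n\<in>{-2 * int N..2 * int N}.
      c n * cis (real_of_int n * x - (real_of_int n)^2 * t))"

text \<open>Fourier multiplier with symbol sigma applied to the product
  (e^{it d^2} phi_2) * conj(e^{it d^2} phi_3), computed frequency by frequency.\<close>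
definition mult_prod :: "(int \<Rightarrow> complex) \<Rightarrow> nat \<Rightarrow> (int \<Rightarrow> complex) \<Rightarrow> nat \<Rightarrow> (int \<Rightarrow> complex)
    \<Rightarrow> real \<Rightarrow> real \<Rightarrow> complex" where
  "mult_prod \<sigma> N2 c2 N3 c3 t x = (\<Sum>n\<in>{-2 * int N2..2 * int N2}. \<Sum>m\<in>{-2 * int N3..2 * int N3}.
      \<sigma> (n - m) * c2 n * cnj (c3 m) *
      cis (real_of_int (n - m) * x - ((real_of_int n)^2 - (real_of_int m)^2) * t))"

definition hilbert_symbol :: "int \<Rightarrow> complex" where
  "hilbert_symbol k = - \<i> * of_int (sgn k)"

definition L2T :: "(real \<Rightarrow> complex) \<Rightarrow> real" where
  "L2T f = sqrt (LBINT x=0..2*pi. (cmod (f x))^2)"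

definition L2TT :: "real \<Rightarrow> (real \<Rightarrow> real \<Rightarrow> complex) \<Rightarrow> real" where
  "L2TT \<delta> F = sqrt (LBINT t=0..\<delta>. (LBINT x=0..2*pi. (cmod (F t x))^2))"

end

theory Submission
  imports Defs
begin

text \<open>Expanding all factors in Fourier modes writes the product as a superposition of plane waves
  e^{i(xi x - tau t)} with xi = +-r + n - m and tau = +-r^2 + n^2 - m^2, where |r| >= N1/2 and
  |n| <= 2 N2, |m| <= 2 N3. Once the frequency of the lower-frequency factor is fixed, two waves with
  the same xi have temporal frequencies at distance >~ N1 times the distance of their remaining
  labels. For such phase-separated families an Ingham-type inequality bounds the L^2 norm over
  [0, T] x T by (T + 1/N1) times the l^2 norm of the coefficients, which the multiplier bound B
  controls. Cauchy-Schwarz over the <~ min(N2, N3) fibres and T <~ 1/N1 give the factor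
  min(N2, N3) / N1.\<close>

section \<open>Integrals of exponentials and Parseval's identity\<close>

definition cis_integral :: "real \<Rightarrow> real \<Rightarrow> real \<Rightarrow> complex" where
  "cis_integral \<mu> a b =
     (if \<mu> = 0 then complex_of_real (b - a) else (cis (\<mu> * b) - cis (\<mu> * a)) / (\<i> * complex_of_real \<mu>))"

lemma has_integral_cis_integral:
  assumes "a \<le> b"
  shows "((\<lambda>t. cis (\<mu> * t)) has_integral cis_integral \<mu> a b) {a..b}"
proof (cases "\<mu> = 0")
  case True
  then show ?thesis
    using has_integral_const_real[of "1::complex" a b] assms by (simp add: cis_integral_def scaleR_conv_of_real)
next
  case False
  let ?F = "\<lambda>t. cis (\<mu> * t) / (\<i> * complex_of_real \<mu>)"
  have "((\<lambda>t. cis (\<mu> * t)) has_integral (?F b - ?F a)) {a..b}"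
  proof (rule fundamental_theorem_of_calculus[OF assms])
    fix x
    have "((\<lambda>z. exp (\<i> * complex_of_real \<mu> * z)) has_field_derivative
        \<i> * complex_of_real \<mu> * exp (\<i> * complex_of_real \<mu> * complex_of_real x)) (at (complex_of_real x))"
      by (auto intro!: derivative_eq_intros)
    from has_vector_derivative_real_field[OF this]
    have "((\<lambda>t. cis (\<mu> * t)) has_vector_derivative \<i> * complex_of_real \<mu> * cis (\<mu> * x)) (at x within {a..b})"
      by (simp add: cis_conv_exp mult.assoc)
    then show "(?F has_vector_derivative cis (\<mu> * x)) (at x within {a..b})"
      using False by (auto intro!: derivative_eq_intros)
  qed
  then show ?thesis using False by (simp add: cis_integral_def diff_divide_distrib)
qed

lemma has_integral_Re_sum_cis:
  assumes "finite D" "a \<le> b"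
  shows "((\<lambda>t. Re (\<Sum>p\<in>D. V p * cis (\<mu> p * t))) has_integral Re (\<Sum>p\<in>D. V p * cis_integral (\<mu> p) a b)) {a..b}"
  by (intro has_integral_Re has_integral_sum[OF assms(1)] has_integral_mult_right has_integral_cis_integral assms(2))

lemma cis_integral_shift: "cis_integral \<mu> s (s + L) = cis (\<mu> * s) * cis_integral \<mu> 0 L"
  by (auto simp: cis_integral_def cis_mult distrib_left right_diff_distrib)

lemma norm_cis_integral_le:
  assumes "0 \<le> L"
  shows "cmod (cis_integral \<mu> 0 L) \<le> L"
proof -
  have "cmod (cis_integral \<mu> 0 L) \<le> 1 * measure lborel {0..L}"
    by (rule has_integral_bound_real[where S="{}", OF _ _ has_integral_cis_integral[OF assms]]) auto
  then show ?thesis using assms by simp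
qed

lemma norm_cis_integral_le_inverse:
  assumes "\<mu> \<noteq> 0"
  shows "cmod (cis_integral \<mu> 0 L) \<le> 2 / \<bar>\<mu>\<bar>"
proof -
  have "cmod (cis (\<mu> * L) - cis (\<mu> * 0)) \<le> 2"
    using norm_triangle_ineq4[of "cis (\<mu> * L)" "cis (\<mu> * 0)"] by simp
  then show ?thesis using assms
    by (simp add: cis_integral_def norm_divide norm_mult divide_right_mono)
qed

lemma cis_integral_int_period:
  "cis_integral (real_of_int m) 0 (2 * pi) = (if m = 0 then complex_of_real (2 * pi) else 0)"
proof -
  have "cis (real_of_int m * (2 * pi)) = 1"
    using cis_multiple_2pi[of "real_of_int m"] by (simp add: mult.commute)
  then show ?thesis by (simp add: cis_integral_def)
qed

lemma has_integral_norm_trig_poly_squared: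
  assumes "finite I"
  shows "((\<lambda>x. (cmod (\<Sum>i\<in>I. G i * cis (real_of_int (\<xi> i) * x)))\<^sup>2) has_integral
     2 * pi * Re (\<Sum>i\<in>I. \<Sum>j\<in>I. if \<xi> i = \<xi> j then G i * cnj (G j) else 0)) {0..2*pi}"
proof -
  let ?w = "\<lambda>i j. G i * cnj (G j)" and ?\<nu> = "\<lambda>i j. real_of_int (\<xi> i - \<xi> j)"
  have square: "(cmod (\<Sum>i\<in>I. G i * cis (real_of_int (\<xi> i) * x)))\<^sup>2 =
      Re (\<Sum>i\<in>I. \<Sum>j\<in>I. ?w i j * cis (?\<nu> i j * x))" for x
  proof -
    have "complex_of_real ((cmod (\<Sum>i\<in>I. G i * cis (real_of_int (\<xi> i) * x)))\<^sup>2)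
       = (\<Sum>i\<in>I. \<Sum>j\<in>I. (G i * cis (real_of_int (\<xi> i) * x)) * cnj (G j * cis (real_of_int (\<xi> j) * x)))"
      by (simp only: complex_norm_square sum_product cnj_sum)
    also have "\<dots> = (\<Sum>i\<in>I. \<Sum>j\<in>I. ?w i j * cis (?\<nu> i j * x))"
      by (intro sum.cong refl) (simp add: cis_cnj cis_mult algebra_simps)
    finally show ?thesis by (metis Re_complex_of_real)
  qed
  have "((\<lambda>x. Re (\<Sum>p\<in>I \<times> I. ?w (fst p) (snd p) * cis (?\<nu> (fst p) (snd p) * x))) has_integral
      Re (\<Sum>p\<in>I \<times> I. ?w (fst p) (snd p) * cis_integral (?\<nu> (fst p) (snd p)) 0 (2*pi))) {0..2*pi}"
    by (rule has_integral_Re_sum_cis) (use assms in auto)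
  moreover have "(\<Sum>i\<in>I. \<Sum>j\<in>I. ?w i j * cis_integral (?\<nu> i j) 0 (2*pi))
     = complex_of_real (2 * pi) * (\<Sum>i\<in>I. \<Sum>j\<in>I. if \<xi> i = \<xi> j then ?w i j else 0)"
    unfolding sum_distrib_left by (intro sum.cong refl) (simp only: cis_integral_int_period, auto)
  moreover have "Re (complex_of_real (2 * pi) * z) = 2 * pi * Re z" for z
    by simp
  ultimately show ?thesis
    unfolding square by (simp only: sum.cartesian_product split_def fst_conv snd_conv)
qed

definition plane_waves :: "'a set \<Rightarrow> ('a \<Rightarrow> complex) \<Rightarrow> ('a \<Rightarrow> int) \<Rightarrow> ('a \<Rightarrow> real) \<Rightarrow> real \<Rightarrow> real \<Rightarrow> complex" where
  "plane_waves I G \<xi> \<tau> t x = (\<Sum>i\<in>I. G i * cis (real_of_int (\<xi> i) * x - \<tau> i * t))"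

lemma has_integral_norm_plane_waves_squared:
  assumes "finite I"
  shows "((\<lambda>x. (cmod (plane_waves I G \<xi> \<tau> t x))\<^sup>2) has_integral
    Re (\<Sum>p\<in>I \<times> I. (complex_of_real (2*pi) * (if \<xi> (fst p) = \<xi> (snd p) then G (fst p) * cnj (G (snd p)) else 0))
          * cis ((\<tau> (snd p) - \<tau> (fst p)) * t))) {0..2*pi}"
proof -
  define G' where "G' i = G i * cis (- (\<tau> i * t))" for i
  have "plane_waves I G \<xi> \<tau> t = (\<lambda>x. \<Sum>i\<in>I. G' i * cis (real_of_int (\<xi> i) * x))"
    by (simp add: fun_eq_iff plane_waves_def G'_def cis_mult mult.assoc)
  moreover have "complex_of_real (2 * pi) * (\<Sum>i\<in>I. \<Sum>j\<in>I. if \<xi> i = \<xi> j then G' i * cnj (G' j) else 0)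
     = (\<Sum>p\<in>I \<times> I. (complex_of_real (2*pi) * (if \<xi> (fst p) = \<xi> (snd p) then G (fst p) * cnj (G (snd p)) else 0))
          * cis ((\<tau> (snd p) - \<tau> (fst p)) * t))"
    unfolding sum.cartesian_product split_def fst_conv snd_conv sum_distrib_left
    by (intro sum.cong refl) (auto simp: G'_def cis_cnj cis_mult algebra_simps)
  moreover have "2 * pi * Re z = Re (complex_of_real (2 * pi) * z)" for z
    by simp
  ultimately show ?thesis
    using has_integral_norm_trig_poly_squared[OF assms, of G' \<xi>] by (simp only:)
qed

section \<open>An Ingham-type inequality for phase-separated plane waves\<close>

text \<open>Since the integrand is nonnegative, its integral over [a+h, a+2h] is at most its integral
  over [s, s+2h] for every s in [a, a+h]; averaging over s gives a double integral of
  exponentials that is computed in closed form.\<close>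
lemma nonneg_trig_sum_integral_le_average:
  assumes D: "finite D" and h: "0 < h"
    and nonneg: "\<And>t. 0 \<le> Re (\<Sum>p\<in>D. V p * cis (\<mu> p * t))"
  shows "h * integral {a+h..a+2*h} (\<lambda>t. Re (\<Sum>p\<in>D. V p * cis (\<mu> p * t)))
     \<le> Re (\<Sum>p\<in>D. V p * cis_integral (\<mu> p) 0 (2*h) * (cis (\<mu> p * a) * cis_integral (\<mu> p) 0 h))"
proof -
  let ?f = "\<lambda>t. Re (\<Sum>p\<in>D. V p * cis (\<mu> p * t))"
  define \<Phi> where "\<Phi> s = Re (\<Sum>p\<in>D. (V p * cis_integral (\<mu> p) 0 (2*h)) * cis (\<mu> p * s))" for s
  have f_integral: "(?f has_integral Re (\<Sum>p\<in>D. V p * cis_integral (\<mu> p) x y)) {x..y}" if "x \<le> y" for x y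
    by (rule has_integral_Re_sum_cis[OF D that])
  have window: "integral {a+h..a+2*h} ?f \<le> \<Phi> s" if s: "s \<in> {a..a+h}" for s
  proof -
    have "integral {a+h..a+2*h} ?f \<le> integral {s..s+2*h} ?f"
      by (rule integral_subset_le)
        (use s h f_integral[of "a+h" "a+2*h"] f_integral[of s "s+2*h"] nonneg in
          \<open>auto simp: has_integral_integrable\<close>)
    also have "\<dots> = Re (\<Sum>p\<in>D. V p * cis_integral (\<mu> p) s (s+2*h))"
      using f_integral[of s "s+2*h"] h by (simp add: integral_unique)
    also have "\<dots> = \<Phi> s"
      unfolding \<Phi>_def cis_integral_shift by (simp add: mult_ac)
    finally show ?thesis .
  qed
  have "((\<lambda>s. integral {a+h..a+2*h} ?f) has_integral (h * integral {a+h..a+2*h} ?f)) {a..a+h}"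
    using has_integral_const_real[of "integral {a+h..a+2*h} ?f" a "a+h"] h by simp
  moreover have "(\<Phi> has_integral Re (\<Sum>p\<in>D. (V p * cis_integral (\<mu> p) 0 (2*h)) * cis_integral (\<mu> p) a (a+h))) {a..a+h}"
    unfolding \<Phi>_def by (rule has_integral_Re_sum_cis[OF D]) (use h in simp)
  ultimately have "h * integral {a+h..a+2*h} ?f
      \<le> Re (\<Sum>p\<in>D. (V p * cis_integral (\<mu> p) 0 (2*h)) * cis_integral (\<mu> p) a (a+h))"
    using window by (rule has_integral_le)
  then show ?thesis
    by (simp add: cis_integral_shift)
qed

lemma integral_le_by_windows:
  fixes f :: "real \<Rightarrow> real"
  assumes h: "0 < h" and T: "0 \<le> T"
    and nonneg: "\<And>t. 0 \<le> f t"
    and integrable: "\<And>x y. f integrable_on {x..y}"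
    and window: "\<And>b. integral {b..b+h} f \<le> K"
  shows "integral {0..T} f \<le> (T / h + 1) * K"
proof -
  have K: "0 \<le> K" using window[of 0] integral_nonneg[OF integrable nonneg, of 0 h] by simp
  have windows: "integral {0..real n * h} f \<le> real n * K" for n
  proof (induction n)
    case 0 then show ?case by simp
  next
    case (Suc n)
    have "integral {0..real (Suc n) * h} f = integral {0..real n * h} f + integral {real n * h..real n * h + h} f"
      using Henstock_Kurzweil_Integration.integral_combine[of 0 "real n * h" "real (Suc n) * h" f] integrable h
      by (simp add: algebra_simps)
    also have "\<dots> \<le> real n * K + K" using Suc window[of "real n * h"] by linarith
    finally show ?case by (simp add: algebra_simps)
  qed
  define n where "n = nat \<lceil>T / h\<rceil>"
  have "T \<le> real n * h"
    using h T unfolding n_def by (simp add: pos_divide_le_eq[symmetric])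
  then have "integral {0..T} f \<le> integral {0..real n * h} f"
    using integrable nonneg by (intro integral_subset_le) auto
  also have "\<dots> \<le> real n * K" by (rule windows)
  also have "\<dots> \<le> (T / h + 1) * K"
  proof (rule mult_right_mono[OF _ K])
    have "real_of_int \<lceil>T / h\<rceil> \<le> T / h + 1" using ceiling_correct[of "T / h"] by linarith
    then show "real n \<le> T / h + 1" using h T unfolding n_def by simp
  qed
  finally show ?thesis .
qed

lemma sum_inverse_squares_atLeastAtMost_le: "M \<ge> 1 \<Longrightarrow> (\<Sum>k=1..M. 1 / (real k)\<^sup>2) \<le> 2 - 1 / real M"
proof (induction M rule: dec_induct)
  case base then show ?case by simp
next
  case (step M)
  have M: "real M \<ge> 1" using step by simp
  have "1 / (real (Suc M))\<^sup>2 \<le> 1 / (real M * real (Suc M))"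
    by (rule divide_left_mono) (use M in \<open>auto simp: power2_eq_square intro!: mult_right_mono\<close>)
  also have "\<dots> = 1 / real M - 1 / real (Suc M)"
    using M by (simp add: field_simps)
  finally show ?case using step by simp
qed

lemma sum_inverse_squares_nat_le:
  assumes "finite B" "0 \<notin> B"
  shows "(\<Sum>k\<in>B. 1 / (real k)\<^sup>2) \<le> 2"
proof (cases "B = {}")
  case False
  have "B \<subseteq> {1..Max B}" using assms by (auto simp: Suc_le_eq intro: Max_ge) (metis gr0I)
  then have "(\<Sum>k\<in>B. 1 / (real k)\<^sup>2) \<le> (\<Sum>k=1..Max B. 1 / (real k)\<^sup>2)"
    by (intro sum_mono2) auto
  also have "\<dots> \<le> 2 - 1 / real (Max B)"
  proof (rule sum_inverse_squares_atLeastAtMost_le)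
    show "1 \<le> Max B" using False assms by (metis Max_in not_less_eq_eq le0 less_one linorder_not_less)
  qed
  moreover have "0 \<le> 1 / real (Max B)" by simp
  ultimately show ?thesis by linarith
qed simp

lemma sum_inverse_squares_int_le:
  assumes "finite A" "0 \<notin> A"
  shows "(\<Sum>m\<in>A. 1 / (real_of_int m)\<^sup>2) \<le> 4"
proof -
  let ?P = "{m\<in>A. 0 < m}" and ?N = "{m\<in>A. m < 0}"
  have "A = ?P \<union> ?N" using assms by auto (metis linorder_neqE_linordered_idom)
  then have "(\<Sum>m\<in>A. 1 / (real_of_int m)\<^sup>2) = (\<Sum>m\<in>?P. 1 / (real_of_int m)\<^sup>2) + (\<Sum>m\<in>?N. 1 / (real_of_int m)\<^sup>2)"
    by (metis (no_types, lifting) assms(1) sum.union_disjoint finite_Un disjoint_iff mem_Collect_eq less_asym)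
  also have "(\<Sum>m\<in>?P. 1 / (real_of_int m)\<^sup>2) = (\<Sum>k\<in>nat ` ?P. 1 / (real k)\<^sup>2)"
    by (subst sum.reindex) (auto simp: inj_on_def intro!: sum.cong)
  also have "(\<Sum>m\<in>?N. 1 / (real_of_int m)\<^sup>2) = (\<Sum>k\<in>(\<lambda>m. nat (- m)) ` ?N. 1 / (real k)\<^sup>2)"
    by (subst sum.reindex) (auto simp: inj_on_def intro!: sum.cong)
  also have "(\<Sum>k\<in>nat ` ?P. 1 / (real k)\<^sup>2) + (\<Sum>k\<in>(\<lambda>m. nat (- m)) ` ?N. 1 / (real k)\<^sup>2) \<le> 2 + 2"
    using assms by (intro add_mono sum_inverse_squares_nat_le) auto
  finally show ?thesis by simp
qed

lemma schur_test:
  fixes g :: "'a \<Rightarrow> real"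
  assumes "finite I" and sym: "\<And>i j. B i j = B j i" and nonneg: "\<And>i j. 0 \<le> B i j"
    and row: "\<And>i. i \<in> I \<Longrightarrow> (\<Sum>j\<in>I. B i j) \<le> K"
  shows "(\<Sum>i\<in>I. \<Sum>j\<in>I. g i * g j * B i j) \<le> K * (\<Sum>i\<in>I. (g i)\<^sup>2)"
proof -
  have "(\<Sum>i\<in>I. \<Sum>j\<in>I. g i * g j * B i j) \<le> (\<Sum>i\<in>I. \<Sum>j\<in>I. ((g i)\<^sup>2 / 2 + (g j)\<^sup>2 / 2) * B i j)"
  proof (intro sum_mono mult_right_mono nonneg)
    fix i j
    show "g i * g j \<le> (g i)\<^sup>2 / 2 + (g j)\<^sup>2 / 2"
      using sum_squares_bound[of "g i" "g j"] by (simp add: power2_eq_square)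
  qed
  also have "\<dots> = (\<Sum>i\<in>I. \<Sum>j\<in>I. (g i)\<^sup>2 / 2 * B i j) + (\<Sum>i\<in>I. \<Sum>j\<in>I. (g j)\<^sup>2 / 2 * B i j)"
    by (simp add: distrib_right sum.distrib)
  also have "(\<Sum>i\<in>I. \<Sum>j\<in>I. (g j)\<^sup>2 / 2 * B i j) = (\<Sum>i\<in>I. \<Sum>j\<in>I. (g i)\<^sup>2 / 2 * B i j)"
    by (subst sum.swap) (simp add: sym)
  also have "(\<Sum>i\<in>I. \<Sum>j\<in>I. (g i)\<^sup>2 / 2 * B i j) + (\<Sum>i\<in>I. \<Sum>j\<in>I. (g i)\<^sup>2 / 2 * B i j)
      = (\<Sum>i\<in>I. (g i)\<^sup>2 * (\<Sum>j\<in>I. B i j))"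
    by (simp add: sum_distrib_left sum_distrib_right mult_ac flip: sum.distrib)
  also have "\<dots> \<le> (\<Sum>i\<in>I. (g i)\<^sup>2 * K)"
    by (intro sum_mono mult_left_mono row) auto
  finally show ?thesis by (simp add: sum_distrib_left mult.commute)
qed

definition phase_separated ::
    "real \<Rightarrow> 'a set \<Rightarrow> ('a \<Rightarrow> complex) \<Rightarrow> ('a \<Rightarrow> int) \<Rightarrow> ('a \<Rightarrow> real) \<Rightarrow> ('a \<Rightarrow> int) \<Rightarrow> bool" where
  "phase_separated S I G \<xi> \<tau> \<kappa> \<longleftrightarrow>
     (\<forall>i\<in>I. \<forall>j\<in>I. i \<noteq> j \<and> G i \<noteq> 0 \<and> G j \<noteq> 0 \<and> \<xi> i = \<xi> j \<longrightarrow>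
        \<kappa> i \<noteq> \<kappa> j \<and> S * \<bar>real_of_int (\<kappa> i - \<kappa> j)\<bar> \<le> \<bar>\<tau> i - \<tau> j\<bar>)"

definition sep_kernel :: "real \<Rightarrow> ('a \<Rightarrow> complex) \<Rightarrow> ('a \<Rightarrow> int) \<Rightarrow> ('a \<Rightarrow> int) \<Rightarrow> 'a \<Rightarrow> 'a \<Rightarrow> real" where
  "sep_kernel S G \<xi> \<kappa> i j =
     (if i = j then 2 / S\<^sup>2
      else if G i \<noteq> 0 \<and> G j \<noteq> 0 \<and> \<xi> i = \<xi> j then 4 / (S * real_of_int (\<kappa> i - \<kappa> j))\<^sup>2
      else 0)"

lemma sep_kernel_commute: "sep_kernel S G \<xi> \<kappa> i j = sep_kernel S G \<xi> \<kappa> j i"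
  unfolding sep_kernel_def by (auto simp: power_mult_distrib power2_commute)

lemma sep_kernel_nonneg: "0 \<le> sep_kernel S G \<xi> \<kappa> i j"
  unfolding sep_kernel_def by auto

lemma norm_cis_integral_pair_le_sep_kernel:
  assumes S: "0 < S" and sep: "phase_separated S I G \<xi> \<tau> \<kappa>"
    and ij: "i \<in> I" "j \<in> I" "\<xi> i = \<xi> j" "G i \<noteq> 0" "G j \<noteq> 0"
  shows "cmod (cis_integral (\<tau> j - \<tau> i) 0 (2 / S)) * cmod (cis_integral (\<tau> j - \<tau> i) 0 (1 / S))
    \<le> sep_kernel S G \<xi> \<kappa> i j"
proof (cases "i = j")
  case True
  have "cmod (cis_integral (\<tau> j - \<tau> i) 0 (2 / S)) * cmod (cis_integral (\<tau> j - \<tau> i) 0 (1 / S)) \<le> (2 / S) * (1 / S)"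
    using S by (intro mult_mono norm_cis_integral_le) auto
  then show ?thesis using True by (simp add: sep_kernel_def power2_eq_square)
next
  case False
  let ?d = "S * \<bar>real_of_int (\<kappa> i - \<kappa> j)\<bar>"
  from sep ij False have "\<kappa> i \<noteq> \<kappa> j" and d: "?d \<le> \<bar>\<tau> j - \<tau> i\<bar>"
    unfolding phase_separated_def by (auto simp: abs_minus_commute)
  then have d_pos: "0 < ?d" using S by simp
  have "cmod (cis_integral (\<tau> j - \<tau> i) 0 (2 / S)) * cmod (cis_integral (\<tau> j - \<tau> i) 0 (1 / S))
      \<le> (2 / \<bar>\<tau> j - \<tau> i\<bar>) * (2 / \<bar>\<tau> j - \<tau> i\<bar>)"
    using d d_pos by (intro mult_mono norm_cis_integral_le_inverse) auto
  also have "\<dots> \<le> (2 / ?d) * (2 / ?d)"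
    using d d_pos by (intro mult_mono divide_left_mono) auto
  also have "\<dots> = sep_kernel S G \<xi> \<kappa> i j"
    using False ij by (simp add: sep_kernel_def power2_eq_square abs_mult_self_eq field_simps)
  finally show ?thesis .
qed

text \<open>Distinct labels make the off-diagonal part of a row a subsum of the sum of 4 / (S m)^2
  over the nonzero integers m.\<close>
lemma sep_kernel_row_sum_le:
  assumes S: "0 < S" and I: "finite I" and sep: "phase_separated S I G \<xi> \<tau> \<kappa>" and i: "i \<in> I"
  shows "(\<Sum>j\<in>I. sep_kernel S G \<xi> \<kappa> i j) \<le> 18 / S\<^sup>2"
proof -
  define J where "J = {j\<in>I - {i}. G i \<noteq> 0 \<and> G j \<noteq> 0 \<and> \<xi> i = \<xi> j}"
  have sep_J: "\<kappa> j \<noteq> \<kappa> j'" if "j \<in> insert i J" "j' \<in> insert i J" "j \<noteq> j'" for j j'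
    using sep that i unfolding phase_separated_def J_def by auto
  have "(\<Sum>j\<in>I. sep_kernel S G \<xi> \<kappa> i j) = sep_kernel S G \<xi> \<kappa> i i + (\<Sum>j\<in>I - {i}. sep_kernel S G \<xi> \<kappa> i j)"
    using I i by (simp add: sum.remove)
  also have "(\<Sum>j\<in>I - {i}. sep_kernel S G \<xi> \<kappa> i j) =
      (\<Sum>j\<in>I - {i}. if G i \<noteq> 0 \<and> G j \<noteq> 0 \<and> \<xi> i = \<xi> j then 4 / (S * real_of_int (\<kappa> i - \<kappa> j))\<^sup>2 else 0)"
    by (intro sum.cong) (auto simp: sep_kernel_def)
  also have "\<dots> = (\<Sum>j\<in>J. 4 / (S * real_of_int (\<kappa> i - \<kappa> j))\<^sup>2)"
    unfolding J_def by (rule sum.inter_filter[symmetric]) (use I in simp)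
  also have "\<dots> = 4 / S\<^sup>2 * (\<Sum>m\<in>(\<lambda>j. \<kappa> j - \<kappa> i) ` J. 1 / (real_of_int m)\<^sup>2)"
    using sep_J by (subst sum.reindex) (auto simp: inj_on_def sum_distrib_left power2_commute power_mult_distrib)
  also have "(\<Sum>m\<in>(\<lambda>j. \<kappa> j - \<kappa> i) ` J. 1 / (real_of_int m)\<^sup>2) \<le> 4"
    using I sep_J by (intro sum_inverse_squares_int_le) (auto simp: J_def)
  finally show ?thesis
    using S by (simp add: sep_kernel_def divide_right_mono)
qed

lemma integrable_norm_plane_waves_squared:
  "finite I \<Longrightarrow> (\<lambda>x. (cmod (plane_waves I G \<xi> \<tau> t x))\<^sup>2) integrable_on {0..2*pi}"
  by (rule has_integral_integrable[OF has_integral_norm_plane_waves_squared])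

lemma integrable_plane_waves_energy:
  assumes I: "finite I"
  shows "(\<lambda>t. integral {0..2*pi} (\<lambda>x. (cmod (plane_waves I G \<xi> \<tau> t x))\<^sup>2)) integrable_on {a..b}"
proof (cases "a \<le> b")
  case True
  show ?thesis
    unfolding integral_unique[OF has_integral_norm_plane_waves_squared[OF I]]
    using I True by (intro has_integral_integrable[OF has_integral_Re_sum_cis]) auto
qed (simp add: integrable_on_empty)

text \<open>On a time window of length h = 1/S the cross terms of the energy are controlled by the
  kernel above, via the averaging trick and Schur's test.\<close>
lemma plane_waves_energy_window_le:
  assumes I: "finite I" and S: "0 < S" and sep: "phase_separated S I G \<xi> \<tau> \<kappa>"
  shows "integral {b..b + 1/S} (\<lambda>t. integral {0..2*pi} (\<lambda>x. (cmod (plane_waves I G \<xi> \<tau> t x))\<^sup>2))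
     \<le> 36 * pi / S * (\<Sum>i\<in>I. (cmod (G i))\<^sup>2)"
proof -
  define V where "V p = complex_of_real (2*pi) * (if \<xi> (fst p) = \<xi> (snd p) then G (fst p) * cnj (G (snd p)) else 0)" for p
  define \<mu> where "\<mu> p = \<tau> (snd p) - \<tau> (fst p)" for p
  define f where "f t = Re (\<Sum>p\<in>I \<times> I. V p * cis (\<mu> p * t))" for t
  define h where "h = 1 / S"
  have h: "0 < h" using S by (simp add: h_def)
  have energy: "((\<lambda>x. (cmod (plane_waves I G \<xi> \<tau> t x))\<^sup>2) has_integral f t) {0..2*pi}" for t
    unfolding f_def V_def \<mu>_def by (rule has_integral_norm_plane_waves_squared[OF I])
  have term_le: "cmod (V (i,j) * cis_integral (\<mu> (i,j)) 0 (2*h) * (cis (\<mu> (i,j) * a) * cis_integral (\<mu> (i,j)) 0 h))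
      \<le> 2 * pi * (cmod (G i) * cmod (G j) * sep_kernel S G \<xi> \<kappa> i j)" if "i \<in> I" "j \<in> I" for i j a
  proof (cases "\<xi> i = \<xi> j \<and> G i \<noteq> 0 \<and> G j \<noteq> 0")
    case True
    with norm_cis_integral_pair_le_sep_kernel[OF S sep that] show ?thesis
      by (simp add: V_def \<mu>_def h_def norm_mult mult_left_mono)
  next
    case False
    then show ?thesis using sep_kernel_nonneg[of S G \<xi> \<kappa> i j] by (auto simp: V_def)
  qed
  have "h * integral {b..b+h} f = h * integral {(b-h)+h..(b-h)+2*h} f" by (simp add: add.commute)
  also have "\<dots> \<le> Re (\<Sum>p\<in>I \<times> I. V p * cis_integral (\<mu> p) 0 (2*h) * (cis (\<mu> p * (b-h)) * cis_integral (\<mu> p) 0 h))"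
    unfolding f_def using I h has_integral_nonneg[OF energy]
    by (intro nonneg_trig_sum_integral_le_average) (auto simp: f_def)
  also have "\<dots> \<le> (\<Sum>p\<in>I \<times> I. cmod (V p * cis_integral (\<mu> p) 0 (2*h) * (cis (\<mu> p * (b-h)) * cis_integral (\<mu> p) 0 h)))"
    by (rule order_trans[OF complex_Re_le_cmod norm_sum])
  also have "\<dots> \<le> (\<Sum>i\<in>I. \<Sum>j\<in>I. 2 * pi * (cmod (G i) * cmod (G j) * sep_kernel S G \<xi> \<kappa> i j))"
    unfolding sum.cartesian_product by (intro sum_mono) (auto intro: term_le)
  also have "\<dots> \<le> 2 * pi * (18 / S\<^sup>2 * (\<Sum>i\<in>I. (cmod (G i))\<^sup>2))"
    unfolding sum_distrib_left[symmetric]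
    by (intro mult_left_mono schur_test[OF I] sep_kernel_commute sep_kernel_nonneg
        sep_kernel_row_sum_le[OF S I sep]) auto
  finally show ?thesis
    using S integral_unique[OF energy] by (simp add: h_def power2_eq_square field_simps)
qed

lemma plane_waves_energy_le:
  assumes I: "finite I" and S: "0 < S" and T: "0 \<le> T" and sep: "phase_separated S I G \<xi> \<tau> \<kappa>"
  shows "integral {0..T} (\<lambda>t. integral {0..2*pi} (\<lambda>x. (cmod (plane_waves I G \<xi> \<tau> t x))\<^sup>2))
     \<le> 36 * pi * (T + 1 / S) * (\<Sum>i\<in>I. (cmod (G i))\<^sup>2)"
proof -
  have "integral {0..T} (\<lambda>t. integral {0..2*pi} (\<lambda>x. (cmod (plane_waves I G \<xi> \<tau> t x))\<^sup>2))
      \<le> (T / (1/S) + 1) * (36 * pi / S * (\<Sum>i\<in>I. (cmod (G i))\<^sup>2))"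
    using S T I by (intro integral_le_by_windows plane_waves_energy_window_le[OF I S sep]
        integrable_plane_waves_energy integral_nonneg integrable_norm_plane_waves_squared) auto
  also have "\<dots> = 36 * pi * (T + 1 / S) * (\<Sum>i\<in>I. (cmod (G i))\<^sup>2)"
    using S by (simp add: field_simps)
  finally show ?thesis .
qed

lemma interval_integral_eq_integral_continuous:
  fixes f :: "real \<Rightarrow> real"
  assumes "0 \<le> b" "continuous_on {0..b} f"
  shows "(LBINT x=0..b. f x) = integral {0..b} f"
  using assms interval_integral_eq_integral[of 0 b f]
  by (simp add: zero_ereal_def borel_integrable_atLeastAtMost')

lemma interval_integral_plane_waves_energy:
  assumes I: "finite I" and T: "0 \<le> T"
  shows "(LBINT t=0..T. (LBINT x=0..2*pi. (cmod (plane_waves I G \<xi> \<tau> t x))\<^sup>2))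
    = integral {0..T} (\<lambda>t. integral {0..2*pi} (\<lambda>x. (cmod (plane_waves I G \<xi> \<tau> t x))\<^sup>2))"
proof -
  have inner: "(LBINT x=0..2*pi. (cmod (plane_waves I G \<xi> \<tau> t x))\<^sup>2)
      = integral {0..2*pi} (\<lambda>x. (cmod (plane_waves I G \<xi> \<tau> t x))\<^sup>2)" for t
    using I by (intro interval_integral_eq_integral_continuous) (auto simp: plane_waves_def intro!: continuous_intros)
  show ?thesis
    unfolding inner integral_unique[OF has_integral_norm_plane_waves_squared[OF I]]
    using I T by (intro interval_integral_eq_integral_continuous) (auto intro!: continuous_intros)
qed

lemma spatial_energy_le_fibres:
  assumes I: "finite I"
  shows "integral {0..2*pi} (\<lambda>x. (cmod (plane_waves I G \<xi> \<tau> t x))\<^sup>2)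
     \<le> real (card (\<rho> ` I)) *
       (\<Sum>p\<in>\<rho> ` I. integral {0..2*pi} (\<lambda>x. (cmod (plane_waves {i\<in>I. \<rho> i = p} G \<xi> \<tau> t x))\<^sup>2))"
proof -
  let ?P = "\<rho> ` I"
  let ?F = "\<lambda>p. plane_waves {i\<in>I. \<rho> i = p} G \<xi> \<tau> t"
  have P: "finite ?P" using I by simp
  have integrable: "(\<lambda>x. (cmod (?F p x))\<^sup>2) integrable_on {0..2*pi}" for p
    using I by (intro integrable_norm_plane_waves_squared) auto
  have fibres: "plane_waves I G \<xi> \<tau> t x = (\<Sum>p\<in>?P. ?F p x)" for x
    unfolding plane_waves_def using I by (simp add: sum.group)
  have "(cmod (plane_waves I G \<xi> \<tau> t x))\<^sup>2 \<le> (\<Sum>p\<in>?P. cmod (?F p x))\<^sup>2" for x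
    unfolding fibres by (intro power_mono norm_sum) auto
  also have "\<dots> x \<le> real (card ?P) * (\<Sum>p\<in>?P. (cmod (?F p x))\<^sup>2)" for x
    using sum_squared_le_sum_of_squares[of "\<lambda>p. cmod (?F p x)" ?P] by (simp add: mult.commute)
  finally have "integral {0..2*pi} (\<lambda>x. (cmod (plane_waves I G \<xi> \<tau> t x))\<^sup>2)
      \<le> integral {0..2*pi} (\<lambda>x. real (card ?P) * (\<Sum>p\<in>?P. (cmod (?F p x))\<^sup>2))"
    using I P integrable
    by (intro integral_le) (auto intro!: integrable_on_mult_right integrable_sum integrable_norm_plane_waves_squared)
  also have "\<dots> = real (card ?P) * (\<Sum>p\<in>?P. integral {0..2*pi} (\<lambda>x. (cmod (?F p x))\<^sup>2))"
    by (simp add: integral_sum[OF P integrable])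
  finally show ?thesis .
qed

lemma plane_waves_energy_le_fibres:
  assumes I: "finite I" and S: "0 < S" and T: "0 \<le> T"
    and sep: "\<And>p. phase_separated S {i\<in>I. \<rho> i = p} G \<xi> \<tau> \<kappa>"
  shows "integral {0..T} (\<lambda>t. integral {0..2*pi} (\<lambda>x. (cmod (plane_waves I G \<xi> \<tau> t x))\<^sup>2))
     \<le> real (card (\<rho> ` I)) * (36 * pi * (T + 1 / S)) * (\<Sum>i\<in>I. (cmod (G i))\<^sup>2)"
proof -
  let ?P = "\<rho> ` I"
  let ?E = "\<lambda>J t. integral {0..2*pi} (\<lambda>x. (cmod (plane_waves J G \<xi> \<tau> t x))\<^sup>2)"
  have P: "finite ?P" using I by simp
  have integrable: "?E {i\<in>I. \<rho> i = p} integrable_on {0..T}" for p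
    using I by (intro integrable_plane_waves_energy) auto
  have "integral {0..T} (?E I) \<le> integral {0..T} (\<lambda>t. real (card ?P) * (\<Sum>p\<in>?P. ?E {i\<in>I. \<rho> i = p} t))"
    using I P integrable spatial_energy_le_fibres[OF I]
    by (intro integral_le) (auto intro!: integrable_on_mult_right integrable_sum integrable_plane_waves_energy)
  also have "\<dots> = real (card ?P) * (\<Sum>p\<in>?P. integral {0..T} (?E {i\<in>I. \<rho> i = p}))"
    by (simp add: integral_sum[OF P integrable])
  also have "\<dots> \<le> real (card ?P) * (\<Sum>p\<in>?P. 36 * pi * (T + 1 / S) * (\<Sum>i\<in>{i\<in>I. \<rho> i = p}. (cmod (G i))\<^sup>2))"
    using I S T sep by (intro mult_left_mono sum_mono plane_waves_energy_le) auto
  also have "\<dots> = real (card ?P) * (36 * pi * (T + 1 / S)) * (\<Sum>i\<in>I. (cmod (G i))\<^sup>2)"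
    using I by (simp add: sum_distrib_left[symmetric] sum.group)
  finally show ?thesis .
qed

section \<open>The trilinear Schroedinger estimate\<close>

text \<open>Spatial and temporal frequency of the product of the mode e^{i e (r x - r^2 t)} with the
  (n, m) mode of mult_prod; the sign e = -1 accounts for a complex conjugate.\<close>
definition triple_freq :: "int \<Rightarrow> int \<times> int \<times> int \<Rightarrow> int" where
  "triple_freq e = (\<lambda>(r, n, m). e * r + n - m)"

definition triple_phase :: "int \<Rightarrow> int \<times> int \<times> int \<Rightarrow> real" where
  "triple_phase e = (\<lambda>(r, n, m). real_of_int (e * r\<^sup>2 + n\<^sup>2 - m\<^sup>2))"

definition triple_coeff ::
    "(int \<Rightarrow> complex) \<Rightarrow> (int \<Rightarrow> complex) \<Rightarrow> (int \<Rightarrow> complex) \<Rightarrow> (int \<Rightarrow> complex) \<Rightarrow> int \<times> int \<times> int \<Rightarrow> complex" where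
  "triple_coeff \<sigma> a c2 c3 = (\<lambda>(r, n, m). a r * \<sigma> (n - m) * c2 n * cnj (c3 m))"

lemma waves_times_mult_prod_eq_plane_waves:
  "(\<Sum>r\<in>R. a r * cis (real_of_int (e * r) * x - real_of_int (e * r\<^sup>2) * t)) * mult_prod \<sigma> N2 c2 N3 c3 t x
    = plane_waves (R \<times> {-2 * int N2..2 * int N2} \<times> {-2 * int N3..2 * int N3})
        (triple_coeff \<sigma> a c2 c3) (triple_freq e) (triple_phase e) t x"
proof -
  let ?u = "\<lambda>r. cis (real_of_int (e * r) * x - real_of_int (e * r\<^sup>2) * t)"
  let ?v = "\<lambda>n m. cis (real_of_int (n - m) * x - ((real_of_int n)\<^sup>2 - (real_of_int m)\<^sup>2) * t)"
  let ?w = "\<lambda>i. cis (real_of_int (triple_freq e i) * x - triple_phase e i * t)"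
  have uv: "?u r * ?v n m = ?w (r, n, m)" for r n m
    unfolding cis_mult by (simp add: triple_freq_def triple_phase_def algebra_simps)
  have "(\<Sum>r\<in>R. a r * ?u r) * mult_prod \<sigma> N2 c2 N3 c3 t x
      = (\<Sum>r\<in>R. \<Sum>n\<in>{-2 * int N2..2 * int N2}. \<Sum>m\<in>{-2 * int N3..2 * int N3}.
          triple_coeff \<sigma> a c2 c3 (r, n, m) * (?u r * ?v n m))"
    unfolding mult_prod_def sum_distrib_right unfolding sum_distrib_left
    by (intro sum.cong refl) (simp add: triple_coeff_def mult_ac)
  then show ?thesis
    unfolding uv by (simp add: plane_waves_def sum.cartesian_product)
qed

text \<open>With r' = r + e s (q - q') the phase difference factors as s (q - q') (q + q' - r - r'), and
  the second factor is at least M / 2 because |r| \<ge> M / 2 while |q|, |q'| \<le> M / 8.\<close>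
lemma resonance_gap:
  fixes e s r r' q q' M N :: int
  assumes e: "e = 1 \<or> e = -1" and s: "s = 1 \<or> s = -1"
    and eq: "e * r + s * q = e * r' + s * q'" and ne: "(q, r) \<noteq> (q', r')"
    and r: "M \<le> 2 * \<bar>r\<bar>" and q: "\<bar>q\<bar> \<le> 2 * N" "\<bar>q'\<bar> \<le> 2 * N" and N: "16 * N \<le> M"
  shows "q \<noteq> q' \<and> M * \<bar>q - q'\<bar> \<le> 2 * \<bar>(e * r\<^sup>2 + s * q\<^sup>2) - (e * r'\<^sup>2 + s * q'\<^sup>2)\<bar>"
proof -
  have r': "r' = r + e * s * (q - q')" using e s eq by (elim disjE) (auto simp: algebra_simps)
  have factor: "(e * r\<^sup>2 + s * q\<^sup>2) - (e * r'\<^sup>2 + s * q'\<^sup>2) = s * (q - q') * (q + q' - r - r')"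
    using e s by (elim disjE) (simp_all add: r' power2_eq_square algebra_simps)
  have "\<bar>e * s * (q - q')\<bar> = \<bar>q - q'\<bar>" using e s by (elim disjE) auto
  then have "2 * \<bar>r\<bar> - \<bar>q - q'\<bar> \<le> \<bar>r + r'\<bar>" unfolding r' by linarith
  moreover have "\<bar>q - q'\<bar> \<le> \<bar>q\<bar> + \<bar>q'\<bar>" "\<bar>q + q'\<bar> \<le> \<bar>q\<bar> + \<bar>q'\<bar>"
    by (rule abs_triangle_ineq4, rule abs_triangle_ineq)
  moreover have "\<bar>r + r'\<bar> - \<bar>q + q'\<bar> \<le> \<bar>q + q' - r - r'\<bar>"
    using abs_triangle_ineq2[of "r + r'" "q + q'"] by (simp add: abs_minus_commute algebra_simps)
  ultimately have big: "M \<le> 2 * \<bar>q + q' - r - r'\<bar>"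
    using r q N by linarith
  have "q \<noteq> q'" using ne r' by auto
  moreover have "M * \<bar>q - q'\<bar> \<le> 2 * \<bar>q + q' - r - r'\<bar> * \<bar>q - q'\<bar>"
    using big by (simp add: mult_right_mono)
  moreover have "\<bar>s * (q - q') * (q + q' - r - r')\<bar> = \<bar>q + q' - r - r'\<bar> * \<bar>q - q'\<bar>"
    using s by (elim disjE) (auto simp: abs_mult)
  ultimately show ?thesis unfolding factor by simp
qed

lemma phase_separated_fixed_last:
  assumes e: "e = 1 \<or> e = -1" and N: "16 * N2 \<le> N1"
    and supp: "\<And>i. G i \<noteq> 0 \<Longrightarrow> int N1 \<le> 2 * \<bar>fst i\<bar>"
  shows "phase_separated (real N1 / 2) {i \<in> R \<times> {-2 * int N2..2 * int N2} \<times> R'. snd (snd i) = m}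
    G (triple_freq e) (triple_phase e) (\<lambda>i. fst (snd i))"
  unfolding phase_separated_def
proof (intro ballI impI)
  fix i j
  assume "i \<in> {i \<in> R \<times> {-2 * int N2..2 * int N2} \<times> R'. snd (snd i) = m}"
    and "j \<in> {i \<in> R \<times> {-2 * int N2..2 * int N2} \<times> R'. snd (snd i) = m}"
  then obtain r n r' n' where ij: "i = (r, n, m)" "j = (r', n', m)"
    and n: "\<bar>n\<bar> \<le> 2 * int N2" "\<bar>n'\<bar> \<le> 2 * int N2" by auto
  assume "i \<noteq> j \<and> G i \<noteq> 0 \<and> G j \<noteq> 0 \<and> triple_freq e i = triple_freq e j"
  then have gap: "n \<noteq> n' \<and> int N1 * \<bar>n - n'\<bar> \<le> 2 * \<bar>(e * r\<^sup>2 + 1 * n\<^sup>2) - (e * r'\<^sup>2 + 1 * n'\<^sup>2)\<bar>"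
    using supp[of i] supp[of j] n N unfolding ij by (intro resonance_gap[OF e]) (auto simp: triple_freq_def)
  have "real_of_int (int N1 * \<bar>n - n'\<bar>) \<le> real_of_int (2 * \<bar>(e * r\<^sup>2 + 1 * n\<^sup>2) - (e * r'\<^sup>2 + 1 * n'\<^sup>2)\<bar>)"
    using gap by (simp only: of_int_le_iff)
  moreover have "triple_phase e i - triple_phase e j = real_of_int ((e * r\<^sup>2 + 1 * n\<^sup>2) - (e * r'\<^sup>2 + 1 * n'\<^sup>2))"
    unfolding ij by (simp add: triple_phase_def)
  ultimately show "fst (snd i) \<noteq> fst (snd j) \<and>
      real N1 / 2 * \<bar>real_of_int (fst (snd i) - fst (snd j))\<bar> \<le> \<bar>triple_phase e i - triple_phase e j\<bar>"
    using gap unfolding ij by simp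
qed

lemma phase_separated_fixed_middle:
  assumes e: "e = 1 \<or> e = -1" and N: "16 * N3 \<le> N1"
    and supp: "\<And>i. G i \<noteq> 0 \<Longrightarrow> int N1 \<le> 2 * \<bar>fst i\<bar>"
  shows "phase_separated (real N1 / 2) {i \<in> R \<times> R' \<times> {-2 * int N3..2 * int N3}. fst (snd i) = n}
    G (triple_freq e) (triple_phase e) (\<lambda>i. snd (snd i))"
  unfolding phase_separated_def
proof (intro ballI impI)
  fix i j
  assume "i \<in> {i \<in> R \<times> R' \<times> {-2 * int N3..2 * int N3}. fst (snd i) = n}"
    and "j \<in> {i \<in> R \<times> R' \<times> {-2 * int N3..2 * int N3}. fst (snd i) = n}"
  then obtain r m r' m' where ij: "i = (r, n, m)" "j = (r', n, m')"
    and m: "\<bar>m\<bar> \<le> 2 * int N3" "\<bar>m'\<bar> \<le> 2 * int N3" by auto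
  assume "i \<noteq> j \<and> G i \<noteq> 0 \<and> G j \<noteq> 0 \<and> triple_freq e i = triple_freq e j"
  then have gap: "m \<noteq> m' \<and> int N1 * \<bar>m - m'\<bar> \<le> 2 * \<bar>(e * r\<^sup>2 + (-1) * m\<^sup>2) - (e * r'\<^sup>2 + (-1) * m'\<^sup>2)\<bar>"
    using supp[of i] supp[of j] m N unfolding ij by (intro resonance_gap[OF e]) (auto simp: triple_freq_def)
  have "real_of_int (int N1 * \<bar>m - m'\<bar>) \<le> real_of_int (2 * \<bar>(e * r\<^sup>2 + (-1) * m\<^sup>2) - (e * r'\<^sup>2 + (-1) * m'\<^sup>2)\<bar>)"
    using gap by (simp only: of_int_le_iff)
  moreover have "triple_phase e i - triple_phase e j = real_of_int ((e * r\<^sup>2 + (-1) * m\<^sup>2) - (e * r'\<^sup>2 + (-1) * m'\<^sup>2))"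
    unfolding ij by (simp add: triple_phase_def)
  ultimately show "snd (snd i) \<noteq> snd (snd j) \<and>
      real N1 / 2 * \<bar>real_of_int (snd (snd i) - snd (snd j))\<bar> \<le> \<bar>triple_phase e i - triple_phase e j\<bar>"
    using gap unfolding ij by simp
qed

lemma sum_norm_triple_coeff_le:
  assumes "\<And>k. cmod (\<sigma> k) \<le> B"
  shows "(\<Sum>i\<in>R1 \<times> R2 \<times> R3. (cmod (triple_coeff \<sigma> a c2 c3 i))\<^sup>2)
     \<le> B\<^sup>2 * ((\<Sum>r\<in>R1. (cmod (a r))\<^sup>2) * (\<Sum>n\<in>R2. (cmod (c2 n))\<^sup>2) * (\<Sum>m\<in>R3. (cmod (c3 m))\<^sup>2))"
proof -
  have "(\<Sum>i\<in>R1 \<times> R2 \<times> R3. (cmod (triple_coeff \<sigma> a c2 c3 i))\<^sup>2)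
      \<le> (\<Sum>(r, n, m)\<in>R1 \<times> R2 \<times> R3. B\<^sup>2 * ((cmod (a r))\<^sup>2 * (cmod (c2 n))\<^sup>2 * (cmod (c3 m))\<^sup>2))"
  proof (intro sum_mono, clarify)
    fix r n m
    have "(cmod (\<sigma> (n - m)))\<^sup>2 \<le> B\<^sup>2" using assms[of "n - m"] by (simp add: power_mono)
    then have "(cmod (\<sigma> (n - m)))\<^sup>2 * ((cmod (a r))\<^sup>2 * (cmod (c2 n))\<^sup>2 * (cmod (c3 m))\<^sup>2)
        \<le> B\<^sup>2 * ((cmod (a r))\<^sup>2 * (cmod (c2 n))\<^sup>2 * (cmod (c3 m))\<^sup>2)"
      by (rule mult_right_mono) simp
    then show "(cmod (triple_coeff \<sigma> a c2 c3 (r, n, m)))\<^sup>2 \<le> B\<^sup>2 * ((cmod (a r))\<^sup>2 * (cmod (c2 n))\<^sup>2 * (cmod (c3 m))\<^sup>2)"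
      by (simp add: triple_coeff_def norm_mult power_mult_distrib mult_ac)
  qed
  also have "\<dots> = B\<^sup>2 * ((\<Sum>r\<in>R1. (cmod (a r))\<^sup>2) * (\<Sum>n\<in>R2. (cmod (c2 n))\<^sup>2) * (\<Sum>m\<in>R3. (cmod (c3 m))\<^sup>2))"
  proof -
    have "(\<Sum>(r, n, m)\<in>R1 \<times> R2 \<times> R3. X r * Y n * Z m) = sum X R1 * sum Y R2 * sum Z R3"
      for X Y Z :: "int \<Rightarrow> real"
      by (simp add: sum.cartesian_product[symmetric] sum_distrib_left[symmetric] sum_distrib_right[symmetric])
    from this[of "\<lambda>r. (cmod (a r))\<^sup>2" "\<lambda>n. (cmod (c2 n))\<^sup>2" "\<lambda>m. (cmod (c3 m))\<^sup>2"] show ?thesis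
      by (simp add: sum_distrib_left[symmetric] case_prod_beta')
  qed
  finally show ?thesis .
qed

lemma triple_fibration:
  fixes R :: "int set"
  assumes e: "e = 1 \<or> e = -1" and big2: "16 * N2 \<le> N1" and big3: "16 * N3 \<le> N1"
    and supp: "\<And>i. G i \<noteq> 0 \<Longrightarrow> int N1 \<le> 2 * \<bar>fst i\<bar>"
  defines "I \<equiv> R \<times> {-2 * int N2..2 * int N2} \<times> {-2 * int N3..2 * int N3}"
  obtains \<rho> \<kappa> :: "int \<times> int \<times> int \<Rightarrow> int"
  where "\<And>p. phase_separated (real N1 / 2) {i\<in>I. \<rho> i = p} G (triple_freq e) (triple_phase e) \<kappa>"
    and "card (\<rho> ` I) \<le> 4 * min N2 N3 + 1"
proof (cases "N3 \<le> N2")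
  case True
  have "card ((\<lambda>i. snd (snd i)) ` I) \<le> card {-2 * int N3..2 * int N3}"
    by (intro card_mono) (auto simp: I_def)
  with True phase_separated_fixed_last[OF e big2 supp] show ?thesis
    by (intro that[of "\<lambda>i. snd (snd i)" "\<lambda>i. fst (snd i)"]) (auto simp: I_def min_def)
next
  case False
  have "card ((\<lambda>i. fst (snd i)) ` I) \<le> card {-2 * int N2..2 * int N2}"
    by (intro card_mono) (auto simp: I_def)
  with False phase_separated_fixed_middle[OF e big3 supp] show ?thesis
    by (intro that[of "\<lambda>i. fst (snd i)" "\<lambda>i. snd (snd i)"]) (auto simp: I_def min_def)
qed

lemma trilinear_energy_le:
  fixes a c2 c3 \<sigma> :: "int \<Rightarrow> complex"
  assumes e: "e = 1 \<or> e = -1" and N2: "1 \<le> N2"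
    and big2: "16 * N2 \<le> N1" and big3: "16 * N3 \<le> N1"
    and supp: "\<And>r. a r \<noteq> 0 \<Longrightarrow> int N1 \<le> 2 * \<bar>r\<bar>"
    and \<delta>: "0 \<le> \<delta>" and \<sigma>: "\<And>k. cmod (\<sigma> k) \<le> B"
  shows "(LBINT t=0..\<delta>. (LBINT x=0..2*pi.
      (cmod ((\<Sum>r\<in>{-2 * int N1..2 * int N1}. a r * cis (real_of_int (e * r) * x - real_of_int (e * r\<^sup>2) * t))
        * mult_prod \<sigma> N2 c2 N3 c3 t x))\<^sup>2))
    \<le> real (4 * min N2 N3 + 1) * (36 * pi * (\<delta> + 1 / (real N1 / 2))) *
       (B\<^sup>2 * ((\<Sum>r\<in>{-2 * int N1..2 * int N1}. (cmod (a r))\<^sup>2) * (\<Sum>n\<in>{-2 * int N2..2 * int N2}. (cmod (c2 n))\<^sup>2)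
          * (\<Sum>m\<in>{-2 * int N3..2 * int N3}. (cmod (c3 m))\<^sup>2)))"
proof -
  define I where "I = {-2 * int N1..2 * int N1} \<times> {-2 * int N2..2 * int N2} \<times> {-2 * int N3..2 * int N3}"
  let ?G = "triple_coeff \<sigma> a c2 c3"
  have S: "0 < real N1 / 2" using big2 N2 by simp
  have supp_G: "int N1 \<le> 2 * \<bar>fst i\<bar>" if "?G i \<noteq> 0" for i
    using that supp by (cases i) (auto simp: triple_coeff_def)
  obtain \<rho> \<kappa> :: "int \<times> int \<times> int \<Rightarrow> int" where
    sep: "\<And>p. phase_separated (real N1 / 2) {i\<in>I. \<rho> i = p} ?G (triple_freq e) (triple_phase e) \<kappa>"
    and card: "card (\<rho> ` I) \<le> 4 * min N2 N3 + 1"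
    using triple_fibration[where G = ?G and R = "{-2 * int N1..2 * int N1}", OF e big2 big3 supp_G, folded I_def]
    by blast
  have "(LBINT t=0..\<delta>. (LBINT x=0..2*pi.
      (cmod ((\<Sum>r\<in>{-2 * int N1..2 * int N1}. a r * cis (real_of_int (e * r) * x - real_of_int (e * r\<^sup>2) * t))
        * mult_prod \<sigma> N2 c2 N3 c3 t x))\<^sup>2))
      = integral {0..\<delta>} (\<lambda>t. integral {0..2*pi}
          (\<lambda>x. (cmod (plane_waves I ?G (triple_freq e) (triple_phase e) t x))\<^sup>2))"
    unfolding waves_times_mult_prod_eq_plane_waves I_def
    by (rule interval_integral_plane_waves_energy) (use \<delta> in auto)
  also have "\<dots> \<le> real (card (\<rho> ` I)) * (36 * pi * (\<delta> + 1 / (real N1 / 2))) * (\<Sum>i\<in>I. (cmod (?G i))\<^sup>2)"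
    by (rule plane_waves_energy_le_fibres[OF _ S \<delta> sep]) (simp add: I_def)
  also have "\<dots> \<le> real (4 * min N2 N3 + 1) * (36 * pi * (\<delta> + 1 / (real N1 / 2))) *
       (B\<^sup>2 * ((\<Sum>r\<in>{-2 * int N1..2 * int N1}. (cmod (a r))\<^sup>2) * (\<Sum>n\<in>{-2 * int N2..2 * int N2}. (cmod (c2 n))\<^sup>2)
          * (\<Sum>m\<in>{-2 * int N3..2 * int N3}. (cmod (c3 m))\<^sup>2)))"
    using card sum_norm_triple_coeff_le[of \<sigma> B, OF \<sigma>] \<delta> S
    by (intro mult_mono) (auto simp: I_def intro: sum_nonneg)
  finally show ?thesis .
qed

lemma L2T_schr_zero: "L2T (schr N c 0) = sqrt (2 * pi * (\<Sum>n\<in>{-2 * int N..2 * int N}. (cmod (c n))\<^sup>2))"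
proof -
  have schr: "schr N c 0 = (\<lambda>x. \<Sum>n\<in>{-2 * int N..2 * int N}. c n * cis (real_of_int (id n) * x))"
    by (simp add: fun_eq_iff schr_def)
  have "Re (\<Sum>i\<in>{-2 * int N..2 * int N}. \<Sum>j\<in>{-2 * int N..2 * int N}. if id i = id j then c i * cnj (c j) else 0)
     = (\<Sum>n\<in>{-2 * int N..2 * int N}. (cmod (c n))\<^sup>2)"
    by (simp add: if_distrib sum.delta Re_sum complex_norm_square[symmetric] del: complex_norm_square cong: if_cong)
  then have "((\<lambda>x. (cmod (schr N c 0 x))\<^sup>2) has_integral 2 * pi * (\<Sum>n\<in>{-2 * int N..2 * int N}. (cmod (c n))\<^sup>2)) {0..2*pi}"
    using has_integral_norm_trig_poly_squared[of "{-2 * int N..2 * int N}" c id] unfolding schr by simp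
  moreover have "(LBINT x=0..2*pi. (cmod (schr N c 0 x))\<^sup>2) = integral {0..2*pi} (\<lambda>x. (cmod (schr N c 0 x))\<^sup>2)"
    by (rule interval_integral_eq_integral_continuous) (auto intro!: continuous_intros simp: schr)
  ultimately show ?thesis
    unfolding L2T_def by (simp add: integral_unique)
qed

lemma trilinear_constant_le:
  fixes m N \<delta> c B A :: real
  assumes m: "1 \<le> m" and N: "0 < N" and \<delta>: "0 \<le> \<delta>" "\<delta> \<le> c / N" and c: "0 < c" and B: "0 \<le> B" and A: "0 \<le> A"
  shows "(4 * m + 1) * (36 * pi * (\<delta> + 1 / (N / 2))) * (B\<^sup>2 * A) \<le> 72 * pi ^ 3 * (c + 2) * (B + 1)\<^sup>2 * (m / N) * A"
proof -
  have "(4 * m + 1) * (36 * pi * (\<delta> + 1 / (N / 2))) * (B\<^sup>2 * A) \<le> (5 * m) * (36 * pi * ((c + 2) / N)) * ((B + 1)\<^sup>2 * A)"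
    using m N \<delta> c B A by (intro mult_mono mult_left_mono power_mono) (auto simp: add_divide_distrib)
  also have "\<dots> = 180 * pi * (c + 2) * (B + 1)\<^sup>2 * (m / N) * A"
    by (simp add: field_simps)
  also have "\<dots> \<le> 72 * pi ^ 3 * (c + 2) * (B + 1)\<^sup>2 * (m / N) * A"
  proof -
    have "180 * pi \<le> 72 * pi ^ 3"
      using pi_ge_two mult_mono[OF pi_ge_two pi_ge_two] by (simp add: power3_eq_cube)
    then show ?thesis
      using m N c A by (intro mult_right_mono) auto
  qed
  finally show ?thesis .
qed

lemma trilinear_constant_le_L2T_squared:
  assumes N2: "1 \<le> N2" and N3: "1 \<le> N3" and N1: "0 < real N1"
    and \<delta>: "0 \<le> \<delta>" "\<delta> \<le> c / real N1" and c: "0 < c" and B: "0 \<le> B"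
  shows "(4 * real (min N2 N3) + 1) * (36 * pi * (\<delta> + 1 / (real N1 / 2))) *
      (B\<^sup>2 * ((\<Sum>n\<in>{-2 * int N1..2 * int N1}. (cmod (u n))\<^sup>2) * (\<Sum>n\<in>{-2 * int N2..2 * int N2}. (cmod (v n))\<^sup>2)
        * (\<Sum>n\<in>{-2 * int N3..2 * int N3}. (cmod (w n))\<^sup>2)))
    \<le> (3 * sqrt (c + 2) * (B + 1) * sqrt (real (min N2 N3) / real N1)
        * L2T (schr N1 u 0) * L2T (schr N2 v 0) * L2T (schr N3 w 0))\<^sup>2"
proof -
  define A1 where "A1 = (\<Sum>n\<in>{-2 * int N1..2 * int N1}. (cmod (u n))\<^sup>2)"
  define A2 where "A2 = (\<Sum>n\<in>{-2 * int N2..2 * int N2}. (cmod (v n))\<^sup>2)"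
  define A3 where "A3 = (\<Sum>n\<in>{-2 * int N3..2 * int N3}. (cmod (w n))\<^sup>2)"
  have A: "0 \<le> A1" "0 \<le> A2" "0 \<le> A3" unfolding A1_def A2_def A3_def by (auto intro: sum_nonneg)
  have "(4 * real (min N2 N3) + 1) * (36 * pi * (\<delta> + 1 / (real N1 / 2))) * (B\<^sup>2 * (A1 * A2 * A3))
      \<le> 72 * pi ^ 3 * (c + 2) * (B + 1)\<^sup>2 * (real (min N2 N3) / real N1) * (A1 * A2 * A3)"
    using N2 N3 N1 \<delta> c B A by (intro trilinear_constant_le) auto
  also have "\<dots> = (3 * sqrt (c + 2) * (B + 1) * sqrt (real (min N2 N3) / real N1)
        * L2T (schr N1 u 0) * L2T (schr N2 v 0) * L2T (schr N3 w 0))\<^sup>2"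
    using c B N1 A unfolding L2T_schr_zero A1_def[symmetric] A2_def[symmetric] A3_def[symmetric]
    by (simp add: power_mult_distrib power3_eq_cube)
  finally show ?thesis unfolding A1_def A2_def A3_def .
qed

lemma schr_eq_modes:
  "schr N c t x = (\<Sum>r\<in>{-2 * int N..2 * int N}. c r * cis (real_of_int (1 * r) * x - real_of_int (1 * r\<^sup>2) * t))"
  by (simp add: schr_def)

lemma cnj_schr_eq_modes:
  "cnj (schr N c t x) =
    (\<Sum>r\<in>{-2 * int N..2 * int N}. cnj (c r) * cis (real_of_int ((-1) * r) * x - real_of_int ((-1) * r\<^sup>2) * t))"
  unfolding schr_def cnj_sum by (intro sum.cong refl) (simp add: cis_cnj algebra_simps)

lemma schr_trilinear_estimate:
  fixes c B \<delta> :: real and c1 c2 c3 \<sigma> :: "int \<Rightarrow> complex"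
  assumes c: "0 < c" and B: "0 \<le> B" and dyadic: "dyadic N2" "dyadic N3"
    and big: "real N1 \<ge> 16 * real N2" "real N1 \<ge> 16 * real N3"
    and supp: "\<forall>n. n \<notin> freq_set N1 \<longrightarrow> c1 n = 0"
    and \<delta>: "0 < \<delta>" "\<delta> \<le> c / real N1" and \<sigma>: "\<forall>k. cmod (\<sigma> k) \<le> B"
  defines "C \<equiv> 3 * sqrt (c + 2) * (B + 1)"
  shows "L2TT \<delta> (\<lambda>t x. schr N1 c1 t x * mult_prod \<sigma> N2 c2 N3 c3 t x)
        \<le> C * sqrt (real (min N2 N3) / real N1) * L2T (schr N1 c1 0) * L2T (schr N2 c2 0) * L2T (schr N3 c3 0)"
    and "L2TT \<delta> (\<lambda>t x. cnj (schr N1 c1 t x) * mult_prod \<sigma> N2 c2 N3 c3 t x)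
        \<le> C * sqrt (real (min N2 N3) / real N1) * L2T (schr N1 c1 0) * L2T (schr N2 c2 0) * L2T (schr N3 c3 0)"
proof -
  have N2: "1 \<le> N2" and N3: "1 \<le> N3" using dyadic unfolding dyadic_def by auto
  have big2: "16 * N2 \<le> N1" and big3: "16 * N3 \<le> N1" using big by (simp_all flip: of_nat_le_iff)
  have N1: "0 < real N1" using big2 N2 by simp
  have \<sigma>_bound: "cmod (\<sigma> k) \<le> B" for k using \<sigma> by blast
  have supp1: "int N1 \<le> 2 * \<bar>n\<bar>" if "c1 n \<noteq> 0" for n
  proof -
    have "\<not> real_of_int \<bar>n\<bar> < real N1 / 2" using supp that big2 N2 by (auto simp: freq_set_def)
    then show ?thesis by linarith
  qed
  define A1 where "A1 = (\<Sum>n\<in>{-2 * int N1..2 * int N1}. (cmod (c1 n))\<^sup>2)"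
  let ?RHS = "C * sqrt (real (min N2 N3) / real N1) * L2T (schr N1 c1 0) * L2T (schr N2 c2 0) * L2T (schr N3 c3 0)"
  have RHS_nonneg: "0 \<le> ?RHS"
    using c B unfolding C_def L2T_schr_zero by (intro mult_nonneg_nonneg) (auto intro!: mult_nonneg_nonneg sum_nonneg)
  have energy_le: "real (4 * min N2 N3 + 1) * (36 * pi * (\<delta> + 1 / (real N1 / 2))) *
      (B\<^sup>2 * (A1 * (\<Sum>n\<in>{-2 * int N2..2 * int N2}. (cmod (c2 n))\<^sup>2) * (\<Sum>n\<in>{-2 * int N3..2 * int N3}. (cmod (c3 n))\<^sup>2)))
      \<le> ?RHS\<^sup>2"
    using trilinear_constant_le_L2T_squared[where u = c1 and v = c2 and w = c3,
        OF N2 N3 N1 less_imp_le[OF \<delta>(1)] \<delta>(2) c B]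
    unfolding A1_def C_def by (simp add: add.commute)
  have bound: "L2TT \<delta> (\<lambda>t x. w t x * mult_prod \<sigma> N2 c2 N3 c3 t x) \<le> ?RHS"
    if "e = 1 \<or> e = -1" "\<And>r. a r \<noteq> 0 \<Longrightarrow> int N1 \<le> 2 * \<bar>r\<bar>" "(\<Sum>r\<in>{-2 * int N1..2 * int N1}. (cmod (a r))\<^sup>2) = A1"
      "\<And>t x. w t x = (\<Sum>r\<in>{-2 * int N1..2 * int N1}. a r * cis (real_of_int (e * r) * x - real_of_int (e * r\<^sup>2) * t))"
    for e a w
    unfolding L2TT_def that(4)
  proof (rule real_le_lsqrt[OF RHS_nonneg order_trans[OF _ energy_le]])
    show "(LBINT t=0..\<delta>. (LBINT x=0..2*pi.
      (cmod ((\<Sum>r\<in>{-2 * int N1..2 * int N1}. a r * cis (real_of_int (e * r) * x - real_of_int (e * r\<^sup>2) * t))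
        * mult_prod \<sigma> N2 c2 N3 c3 t x))\<^sup>2))
      \<le> real (4 * min N2 N3 + 1) * (36 * pi * (\<delta> + 1 / (real N1 / 2))) *
      (B\<^sup>2 * (A1 * (\<Sum>n\<in>{-2 * int N2..2 * int N2}. (cmod (c2 n))\<^sup>2) * (\<Sum>n\<in>{-2 * int N3..2 * int N3}. (cmod (c3 n))\<^sup>2)))"
      using trilinear_energy_le[where a = a and \<sigma> = \<sigma> and B = B, OF that(1) N2 big2 big3 that(2) less_imp_le[OF \<delta>(1)] \<sigma>_bound]
      unfolding that(3) .
  qed
  show "L2TT \<delta> (\<lambda>t x. schr N1 c1 t x * mult_prod \<sigma> N2 c2 N3 c3 t x) \<le> ?RHS"
    by (rule bound[of 1 c1]) (auto simp: A1_def supp1 schr_eq_modes)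
  show "L2TT \<delta> (\<lambda>t x. cnj (schr N1 c1 t x) * mult_prod \<sigma> N2 c2 N3 c3 t x) \<le> ?RHS"
    by (rule bound[of "-1" "\<lambda>r. cnj (c1 r)"]) (auto simp: A1_def supp1 cnj_schr_eq_modes)
qed

theorem lemma2p9:
  shows "\<exists>C0>0. \<forall>c>0. \<forall>B\<ge>0. \<exists>C>0.
    \<forall>N1 N2 N3 c1 c2 c3 \<delta> (\<sigma> :: int \<Rightarrow> complex).
      dyadic N1 \<and> dyadic N2 \<and> dyadic N3 \<and>
      real N1 \<ge> C0 * real N2 \<and> real N1 \<ge> C0 * real N3 \<and>
      (\<forall>n. n \<notin> freq_set N1 \<longrightarrow> c1 n = 0) \<and>
      (\<forall>n. n \<notin> freq_set N2 \<longrightarrow> c2 n = 0) \<and>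
      (\<forall>n. n \<notin> freq_set N3 \<longrightarrow> c3 n = 0) \<and>
      0 < \<delta> \<and> \<delta> \<le> c / real N1 \<and>
      (\<forall>k. cmod (\<sigma> k) \<le> B)
      \<longrightarrow>
      L2TT \<delta> (\<lambda>t x. schr N1 c1 t x * mult_prod \<sigma> N2 c2 N3 c3 t x)
        \<le> C * sqrt (real (min N2 N3) / real N1)
            * L2T (schr N1 c1 0) * L2T (schr N2 c2 0) * L2T (schr N3 c3 0) \<and>
      L2TT \<delta> (\<lambda>t x. cnj (schr N1 c1 t x) * mult_prod \<sigma> N2 c2 N3 c3 t x)
        \<le> C * sqrt (real (min N2 N3) / real N1)
            * L2T (schr N1 c1 0) * L2T (schr N2 c2 0) * L2T (schr N3 c3 0)"
  apply (rule exI[of _ 16], intro conjI allI impI)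
   apply simp
  subgoal for c B
    by (intro exI[of _ "3 * sqrt (c + 2) * (B + 1)"] conjI allI impI) (auto intro!: schr_trilinear_estimate)
  done

end
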